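(* Let $\Gamma_{\mathcal{W}}$ and $t_\lambda$ be as in the context. The stabilizer of $\infty$ in $\Gamma_{\mathcal{W}}$ is the cyclic group generated by $t_\lambda$.
   Context: $\Gamma$ is a geometrically finite, non-cocompact Fuchsian group acting on the upper half-plane $\mathbb{H}$, containing hyperbolic but no parabolic elements, with $\Gamma\backslash\mathbb{H}$ of infinite area, and whose ordinary set contains a neighborhood of $\infty$. For $g=\begin{bmatrix}a&b\\c&d\end{bmatrix}\in\Gamma\setminus\{\mathrm{id}\}$ let $\mathrm{I}(g)=\{z\in\mathbb{H}:|cz+d|=1\}$, $\mathrm{ext}\,\mathrm{I}(g)=\{z:|cz+d|>1\}$, $\mathcal{K}=\bigcap_{g\ne\mathrm{id}}\mathrm{ext}\,\mathrm{I}(g)$; $\Gamma_{\mathrm{REL}}$ is the set of $g$ such that $\mathrm{I}(g)\cap\partial\mathcal{K}$ contains more than one point. With $\mathrm{pr}_\infty(x+iy)=x$, let $\alpha$ (resp. $\beta$) be the largest (resp. smallest) real number with $\partial\mathcal{K}\subseteq\mathrm{pr}_\infty^{-1}([\alpha,\beta])$, fix $\alpha'<\alpha$, $\beta'>\beta$, $\lambda=\beta'-\alpha'$, $t_\lambda=\begin{bmatrix}1&\lambda\\0&1\end{bmatrix}$, and $\mathcal{W}=\mathcal{K}\cap\mathrm{pr}_\infty^{-1}((\alpha',\beta'))$. $\Gamma_{\mathcal{W}}$ is the group generated by $\Gamma_{\mathrm{REL}}\cup\{t_\lambda\}$; it is a Fuchsian group having $\mathcal{W}$ as a fundamental domain.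 *)

theory Defs
  imports "HOL-Analysis.Analysis"
begin

text \<open>A matrix [a b; c d]. A subgroup of PSL(2,R) is represented by its full
  preimage in SL(2,R), i.e. a subgroup of SL(2,R) containing -I.\<close>

record m2 =
  ma :: real
  mb :: real
  mc :: real
  md :: real

definition mI :: m2 where "mI = \<lparr>ma = 1, mb = 0, mc = 0, md = 1\<rparr>"

definition mneg :: "m2 \<Rightarrow> m2" where
  "mneg g = \<lparr>ma = - ma g, mb = - mb g, mc = - mc g, md = - md g\<rparr>"

definition mmul :: "m2 \<Rightarrow> m2 \<Rightarrow> m2" where
  "mmul g h = \<lparr>ma = ma g * ma h + mb g * mc h, mb = ma g * mb h + mb g * md h,
               mc = mc g * ma h + md g * mc h, md = mc g * mb h + md g * md h\<rparr>"

definition mdet :: "m2 \<Rightarrow> real" where "mdet g = ma g * md g - mb g * mc g"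

text \<open>Inverse of a determinant-one matrix.\<close>
definition minv :: "m2 \<Rightarrow> m2" where
  "minv g = \<lparr>ma = md g, mb = - mb g, mc = - mc g, md = ma g\<rparr>"

definition SL2 :: "m2 set" where "SL2 = {g. mdet g = 1}"

definition mtrace :: "m2 \<Rightarrow> real" where "mtrace g = ma g + md g"

definition is_id :: "m2 \<Rightarrow> bool" where "is_id g \<longleftrightarrow> g = mI \<or> g = mneg mI"

definition psl_subgroup :: "m2 set \<Rightarrow> bool" where
  "psl_subgroup G \<longleftrightarrow> G \<subseteq> SL2 \<and> mI \<in> G \<and> mneg mI \<in> G \<and>
     (\<forall>g\<in>G. \<forall>h\<in>G. mmul g h \<in> G) \<and> (\<forall>g\<in>G. minv g \<in> G)"

inductive_set gen_group :: "m2 set \<Rightarrow> m2 set" for S where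
  gen_id: "mI \<in> gen_group S"
| gen_neg: "mneg mI \<in> gen_group S"
| gen_mul: "s \<in> S \<Longrightarrow> g \<in> gen_group S \<Longrightarrow> mmul s g \<in> gen_group S"
| gen_mul_inv: "s \<in> S \<Longrightarrow> g \<in> gen_group S \<Longrightarrow> mmul (minv s) g \<in> gen_group S"

text \<open>Stabilizer of \<infinity>: g(\<infinity>) = a/c equals \<infinity> iff c = 0.\<close>
definition stab_inf :: "m2 set \<Rightarrow> m2 set" where
  "stab_inf G = {g \<in> G. mc g = 0}"

definition UHP :: "complex set" where "UHP = {z. Im z > 0}"

definition moeb :: "m2 \<Rightarrow> complex \<Rightarrow> complex" where
  "moeb g z = (of_real (ma g) * z + of_real (mb g)) / (of_real (mc g) * z + of_real (md g))"

text \<open>Discrete subgroup of PSL(2,R) (discreteness checked in SL(2,R), which is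
  equivalent).\<close>
definition fuchsian :: "m2 set \<Rightarrow> bool" where
  "fuchsian G \<longleftrightarrow> psl_subgroup G \<and>
     (\<forall>g\<in>G. \<exists>e>0. \<forall>h\<in>G.
        \<bar>ma h - ma g\<bar> + \<bar>mb h - mb g\<bar> + \<bar>mc h - mc g\<bar> + \<bar>md h - md g\<bar> < e \<longrightarrow> h = g)"

definition hyperbolic_elt :: "m2 \<Rightarrow> bool" where
  "hyperbolic_elt g \<longleftrightarrow> \<bar>mtrace g\<bar> > 2"

definition parabolic_elt :: "m2 \<Rightarrow> bool" where
  "parabolic_elt g \<longleftrightarrow> \<bar>mtrace g\<bar> = 2 \<and> \<not> is_id g"

definition fundamental_domain :: "m2 set \<Rightarrow> complex set \<Rightarrow> bool" where
  "fundamental_domain G F \<longleftrightarrow> open F \<and> F \<subseteq> UHP \<and>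
     (\<forall>g\<in>G. \<not> is_id g \<longrightarrow> moeb g ` F \<inter> F = {}) \<and>
     (\<Union>g\<in>G. moeb g ` (closure F \<inter> UHP)) = UHP"

text \<open>Open hyperbolic half-planes in H: bounded by a vertical geodesic or a
  semicircle orthogonal to the real axis.\<close>
definition hyp_halfplane :: "complex set \<Rightarrow> bool" where
  "hyp_halfplane P \<longleftrightarrow>
     (\<exists>a::real. P = {z\<in>UHP. Re z < a} \<or> P = {z\<in>UHP. Re z > a}) \<or>
     (\<exists>(a::real) (r::real). r > 0 \<and>
        (P = {z\<in>UHP. cmod (z - of_real a) < r} \<or> P = {z\<in>UHP. cmod (z - of_real a) > r}))"

definition finite_sided_convex_fd :: "m2 set \<Rightarrow> complex set \<Rightarrow> bool" where
  "finite_sided_convex_fd G F \<longleftrightarrow> fundamental_domain G F \<and>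
     (\<exists>\<P>. finite \<P> \<and> (\<forall>P\<in>\<P>. hyp_halfplane P) \<and> F = UHP \<inter> \<Inter>\<P>)"

definition geometrically_finite :: "m2 set \<Rightarrow> bool" where
  "geometrically_finite G \<longleftrightarrow> (\<exists>F. finite_sided_convex_fd G F)"

text \<open>Cocompact: G \ H is compact, i.e. the G-translates of some compact subset of H
  cover H.\<close>
definition cocompact :: "m2 set \<Rightarrow> bool" where
  "cocompact G \<longleftrightarrow> (\<exists>C. compact C \<and> C \<subseteq> UHP \<and> (\<Union>g\<in>G. moeb g ` C) = UHP)"

definition hyp_area :: "complex set \<Rightarrow> ennreal" where
  "hyp_area F = (\<integral>\<^sup>+ z. indicator F z * ennreal (1 / (Im z)\<^sup>2) \<partial>lborel)"

text \<open>G \ H has infinite area: the area of a (finite-sided convex) fundamental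
  domain is infinite.\<close>
definition infinite_covolume :: "m2 set \<Rightarrow> bool" where
  "infinite_covolume G \<longleftrightarrow> (\<exists>F. finite_sided_convex_fd G F \<and> hyp_area F = \<infinity>)"

text \<open>Limit set: accumulation points of orbits of points of H (these lie on the
  boundary R \<union> {\<infinity>}).\<close>
definition limit_point_real :: "m2 set \<Rightarrow> real \<Rightarrow> bool" where
  "limit_point_real G x \<longleftrightarrow> (\<exists>z\<in>UHP. \<exists>s::nat \<Rightarrow> m2. (\<forall>n. s n \<in> G) \<and>
      (\<lambda>n. moeb (s n) z) \<longlonglongrightarrow> of_real x)"

definition limit_point_inf :: "m2 set \<Rightarrow> bool" where
  "limit_point_inf G \<longleftrightarrow> (\<exists>z\<in>UHP. \<exists>s::nat \<Rightarrow> m2. (\<forall>n. s n \<in> G) \<and>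
      filterlim (\<lambda>n. cmod (moeb (s n) z)) at_top sequentially)"

text \<open>The ordinary set contains a neighbourhood of \<infinity>.\<close>
definition ordinary_nbhd_inf :: "m2 set \<Rightarrow> bool" where
  "ordinary_nbhd_inf G \<longleftrightarrow> \<not> limit_point_inf G \<and>
     (\<exists>R. \<forall>x. \<bar>x\<bar> > R \<longrightarrow> \<not> limit_point_real G x)"

definition isom_circle :: "m2 \<Rightarrow> complex set" where
  "isom_circle g = {z\<in>UHP. cmod (of_real (mc g) * z + of_real (md g)) = 1}"

definition ext_isom_circle :: "m2 \<Rightarrow> complex set" where
  "ext_isom_circle g = {z\<in>UHP. cmod (of_real (mc g) * z + of_real (md g)) > 1}"

definition fordK :: "m2 set \<Rightarrow> complex set" where
  "fordK G = UHP \<inter> (\<Inter>g\<in>{g\<in>G. \<not> is_id g}. ext_isom_circle g)"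

definition bdK :: "m2 set \<Rightarrow> complex set" where
  "bdK G = frontier (fordK G) \<inter> UHP"

definition Gamma_REL :: "m2 set \<Rightarrow> m2 set" where
  "Gamma_REL G = {g\<in>G. \<not> is_id g \<and>
      (\<exists>z w. z \<noteq> w \<and> z \<in> isom_circle g \<inter> bdK G \<and> w \<in> isom_circle g \<inter> bdK G)}"

definition translation :: "real \<Rightarrow> m2" where
  "translation l = \<lparr>ma = 1, mb = l, mc = 0, md = 1\<rparr>"

definition Gamma_W :: "m2 set \<Rightarrow> real \<Rightarrow> m2 set" where
  "Gamma_W G l = gen_group (Gamma_REL G \<union> {translation l})"

end

theory Submission
  imports Defs
begin

text \<open>All relevant elements lie in \<open>\<Gamma>\<close>, so every element of \<open>\<Gamma>\<^sub>\<W>\<close> is a word alternating between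
  nontrivial elements of \<open>\<Gamma>\<close> and nontrivial powers of \<open>t\<^sub>\<lambda>\<close>. Since \<open>\<infinity>\<close> is not a limit point, the
  orbit of \<open>\<i>\<close> is bounded; with no parabolic elements this forces \<open>c \<noteq> 0\<close> for every nontrivial
  element of \<open>\<Gamma>\<close>, and with discreteness even \<open>\<bar>c\<bar> \<ge> \<delta> > 0\<close>. Hence high enough points of every
  vertical line lie in \<open>K\<close>, and every isometric interval \<open>{x. \<bar>c x + d\<bar> \<le> 1}\<close> lies in
  \<open>[\<alpha>, \<beta>]\<close>. Now play ping-pong: \<open>\<gamma>\<close> maps the complement of its isometric interval into the
  isometric interval of \<open>\<gamma>\<inverse>\<close>, hence into \<open>[\<alpha>, \<beta>]\<close>, while a nontrivial power of \<open>t\<^sub>\<lambda>\<close> moves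
  \<open>[\<alpha>, \<beta>]\<close> off itself because \<open>\<lambda> > \<beta> - \<alpha>\<close>. So a word sends \<open>\<infinity>\<close> into \<open>[\<alpha>, \<beta>]\<close> or outside it
  according to its leftmost letter, and only the words in \<open>\<langle>t\<^sub>\<lambda>\<rangle>\<close> fix \<open>\<infinity>\<close>.\<close>

section \<open>Matrix algebra and generated groups\<close>

lemma m2_eqI:
  fixes g h :: m2
  shows "ma g = ma h \<Longrightarrow> mb g = mb h \<Longrightarrow> mc g = mc h \<Longrightarrow> md g = md h \<Longrightarrow> g = h"
  by (rule m2.equality) (simp_all add: unit_eq[of "more g"] unit_eq[of "more h"])

lemma mmul_assoc: "mmul (mmul f g) h = mmul f (mmul g h)"
  by (rule m2_eqI) (simp_all add: mmul_def algebra_simps)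

lemma mmul_mI_left [simp]: "mmul mI g = g"
  and mmul_mI_right [simp]: "mmul g mI = g"
  by (rule m2_eqI; simp add: mmul_def mI_def)+

lemma mmul_mneg_left: "mmul (mneg g) h = mneg (mmul g h)"
  and mmul_mneg_right: "mmul g (mneg h) = mneg (mmul g h)"
  by (rule m2_eqI; simp add: mmul_def mneg_def algebra_simps)+

lemma mneg_mneg [simp]: "mneg (mneg g) = g"
  by (rule m2_eqI) (simp_all add: mneg_def)

lemma minv_minv [simp]: "minv (minv g) = g"
  by (rule m2_eqI) (simp_all add: minv_def)

lemma mmul_minv_right: "mdet g = 1 \<Longrightarrow> mmul g (minv g) = mI"
  by (rule m2_eqI) (simp_all add: mmul_def minv_def mI_def mdet_def algebra_simps)

lemma is_id_minv_iff [simp]: "is_id (minv g) \<longleftrightarrow> is_id g"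
proof -
  have "minv mI = mI" "minv (mneg mI) = mneg mI"
    by (rule m2_eqI; simp add: minv_def mI_def mneg_def)+
  then show ?thesis
    unfolding is_id_def by (metis minv_minv)
qed

lemma is_id_mneg_iff [simp]: "is_id (mneg g) \<longleftrightarrow> is_id g"
  unfolding is_id_def by (metis mneg_mneg)

lemma is_id_mmul: "is_id f \<Longrightarrow> mmul f g = g \<or> mmul f g = mneg g"
  unfolding is_id_def by (auto simp: mmul_mneg_left)

lemma psl_subgroup_mdet: "psl_subgroup G \<Longrightarrow> g \<in> G \<Longrightarrow> mdet g = 1"
  and psl_subgroup_mmul: "psl_subgroup G \<Longrightarrow> g \<in> G \<Longrightarrow> h \<in> G \<Longrightarrow> mmul g h \<in> G"
  and psl_subgroup_minv: "psl_subgroup G \<Longrightarrow> g \<in> G \<Longrightarrow> minv g \<in> G"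
  and psl_subgroup_mI: "psl_subgroup G \<Longrightarrow> mI \<in> G"
  by (auto simp: psl_subgroup_def SL2_def)

lemma psl_subgroup_mneg: "psl_subgroup G \<Longrightarrow> g \<in> G \<Longrightarrow> mneg g \<in> G"
  unfolding psl_subgroup_def by (metis mmul_mneg_left mmul_mI_left)

lemma gen_group_mneg: "g \<in> gen_group S \<Longrightarrow> mneg g \<in> gen_group S"
  by (induction rule: gen_group.induct)
    (auto intro: gen_group.intros simp flip: mmul_mneg_right)

lemma gen_group_mmul: "g \<in> gen_group S \<Longrightarrow> h \<in> gen_group S \<Longrightarrow> mmul g h \<in> gen_group S"
  by (induction rule: gen_group.induct)
    (auto intro: gen_group.intros gen_group_mneg simp: mmul_assoc mmul_mneg_left)

lemma gen_group_mono: "g \<in> gen_group S \<Longrightarrow> S \<subseteq> S' \<Longrightarrow> g \<in> gen_group S'"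
  by (induction rule: gen_group.induct) (auto intro: gen_group.intros)

lemma gen_group_generator: "s \<in> S \<Longrightarrow> s \<in> gen_group S"
  and gen_group_minv_generator: "s \<in> S \<Longrightarrow> minv s \<in> gen_group S"
  by (metis gen_group.gen_id gen_group.gen_mul gen_group.gen_mul_inv mmul_mI_right)+

lemma mmul_translation_translation: "mmul (translation u) (translation v) = translation (u + v)"
  by (rule m2_eqI) (simp_all add: mmul_def translation_def)

lemma translation_0: "translation 0 = mI"
  by (rule m2_eqI) (simp_all add: translation_def mI_def)

lemma gen_group_translationE:
  assumes "g \<in> gen_group {translation l}"
  obtains k :: int where "g = translation (of_int k * l) \<or> g = mneg (translation (of_int k * l))"
proof -
  have "\<exists>k::int. g = translation (of_int k * l) \<or> g = mneg (translation (of_int k * l))"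
    using assms
  proof (induction rule: gen_group.induct)
    case gen_id
    then show ?case by (metis mult_zero_left of_int_0 translation_0)
  next
    case gen_neg
    then show ?case by (metis mult_zero_left of_int_0 translation_0)
  next
    case (gen_mul s g)
    then obtain k :: int where "g = translation (of_int k * l) \<or> g = mneg (translation (of_int k * l))"
      by blast
    moreover have "mmul (translation l) (translation (of_int k * l)) = translation (of_int (k + 1) * l)"
      by (simp add: mmul_translation_translation algebra_simps)
    ultimately show ?case
      using gen_mul.hyps(1) by (metis mmul_mneg_right singletonD)
  next
    case (gen_mul_inv s g)
    then obtain k :: int where "g = translation (of_int k * l) \<or> g = mneg (translation (of_int k * l))"
      by blast
    moreover have "minv (translation l) = translation (- l)"
      by (rule m2_eqI) (simp_all add: minv_def translation_def)
    moreover have "mmul (translation (- l)) (translation (of_int k * l)) = translation (of_int (k - 1) * l)"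
      by (simp add: mmul_translation_translation algebra_simps)
    ultimately show ?case
      using gen_mul_inv.hyps(1) by (metis mmul_mneg_right singletonD)
  qed
  then show ?thesis
    using that by blast
qed

lemma gen_group_translation_upper_triangular:
  "g \<in> gen_group {translation l} \<Longrightarrow> mc g = 0 \<and> (ma g = 1 \<or> ma g = -1)"
  by (elim gen_group_translationE) (auto simp: translation_def mneg_def)

section \<open>Ping-pong\<close>

datatype word_head = In_T | Lead_G | Lead_T

text \<open>\<open>reduced G l k g\<close>: \<open>g\<close> is a product alternating between nontrivial elements of \<open>G\<close> and
  of \<open>\<langle>t\<^sub>l\<rangle>\<close>, whose rightmost factor is an arbitrary element of \<open>\<langle>t\<^sub>l\<rangle>\<close>; \<open>k\<close> says whether \<open>g\<close> lies in
  \<open>\<langle>t\<^sub>l\<rangle>\<close> itself or which kind of factor comes leftmost.\<close>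
inductive reduced :: "m2 set \<Rightarrow> real \<Rightarrow> word_head \<Rightarrow> m2 \<Rightarrow> bool" for G l where
  reduced_T: "\<tau> \<in> gen_group {translation l} \<Longrightarrow> reduced G l In_T \<tau>"
| reduced_G: "\<gamma> \<in> G \<Longrightarrow> \<not> is_id \<gamma> \<Longrightarrow> reduced G l k g \<Longrightarrow> k \<noteq> Lead_G \<Longrightarrow>
    reduced G l Lead_G (mmul \<gamma> g)"
| reduced_TG: "\<tau> \<in> gen_group {translation l} \<Longrightarrow> \<not> is_id \<tau> \<Longrightarrow> reduced G l Lead_G g \<Longrightarrow>
    reduced G l Lead_T (mmul \<tau> g)"

lemma reduced_mneg:
  assumes G: "psl_subgroup G" and "reduced G l k g"
  shows "reduced G l k (mneg g)"
  using assms(2)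
proof cases
  case reduced_T
  then show ?thesis by (simp add: reduced.reduced_T gen_group_mneg)
next
  case (reduced_G \<gamma> k' g')
  then show ?thesis
    using reduced.reduced_G[of "mneg \<gamma>"] psl_subgroup_mneg[OF G] by (simp add: mmul_mneg_left)
next
  case (reduced_TG \<tau> g')
  then show ?thesis
    using reduced.reduced_TG[of "mneg \<tau>"] gen_group_mneg by (simp add: mmul_mneg_left)
qed

lemma reduced_is_id_mmul:
  "psl_subgroup G \<Longrightarrow> is_id f \<Longrightarrow> reduced G l k g \<Longrightarrow> reduced G l k (mmul f g)"
  using is_id_mmul reduced_mneg by metis

lemma reduced_mmul_translation:
  assumes G: "psl_subgroup G" and \<sigma>: "\<sigma> \<in> gen_group {translation l}" and "reduced G l k g"
  shows "\<exists>k'. reduced G l k' (mmul \<sigma> g)"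
  using assms(3)
proof cases
  case reduced_T
  then show ?thesis using \<sigma> by (metis reduced.reduced_T gen_group_mmul)
next
  case reduced_G
  then show ?thesis
    using reduced.reduced_TG[OF \<sigma>] reduced_is_id_mmul[OF G] assms(3) by blast
next
  case (reduced_TG \<tau> g')
  have "mmul \<sigma> \<tau> \<in> gen_group {translation l}"
    using \<sigma> reduced_TG(3) by (rule gen_group_mmul)
  moreover have "mmul \<sigma> g = mmul (mmul \<sigma> \<tau>) g'"
    using reduced_TG(2) by (simp add: mmul_assoc)
  ultimately show ?thesis
    using reduced.reduced_TG reduced_is_id_mmul[OF G] reduced_TG(5) by metis
qed

lemma reduced_mmul_G:
  assumes G: "psl_subgroup G" and \<sigma>: "\<sigma> \<in> G" and "reduced G l k g"
  shows "\<exists>k'. reduced G l k' (mmul \<sigma> g)"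
proof (cases "is_id \<sigma>")
  case True
  then show ?thesis using reduced_is_id_mmul[OF G] assms(3) by blast
next
  case False
  show ?thesis
    using assms(3)
  proof cases
    case (reduced_G \<gamma> k' g')
    have "mmul \<sigma> \<gamma> \<in> G"
      using psl_subgroup_mmul[OF G \<sigma> reduced_G(3)] .
    moreover have "mmul \<sigma> g = mmul (mmul \<sigma> \<gamma>) g'"
      using reduced_G(2) by (simp add: mmul_assoc)
    ultimately show ?thesis
      using reduced.reduced_G reduced_is_id_mmul[OF G] reduced_G(5,6) by metis
  qed (use reduced.reduced_G[OF \<sigma> False assms(3)] in auto)
qed

lemma reduced_exists:
  assumes G: "psl_subgroup G" and R: "R \<subseteq> G"
  shows "g \<in> gen_group (R \<union> {translation l}) \<Longrightarrow> \<exists>k. reduced G l k g"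
proof (induction rule: gen_group.induct)
  case gen_id
  then show ?case using reduced_T gen_group.gen_id by blast
next
  case gen_neg
  then show ?case using reduced_T gen_group.gen_neg by blast
next
  case (gen_mul s g)
  then show ?case
    using reduced_mmul_G[OF G] reduced_mmul_translation[OF G] R gen_group_generator by blast
next
  case (gen_mul_inv s g)
  then show ?case
    using reduced_mmul_G[OF G] reduced_mmul_translation[OF G] R psl_subgroup_minv[OF G]
      gen_group_minv_generator by blast
qed

text \<open>\<open>ma g / mc g\<close> is the image of \<open>\<infinity>\<close> under \<open>g\<close>.\<close>
fun inf_position :: "real \<Rightarrow> real \<Rightarrow> word_head \<Rightarrow> m2 \<Rightarrow> bool" where
  "inf_position \<alpha> \<beta> In_T g \<longleftrightarrow> mc g = 0"
| "inf_position \<alpha> \<beta> Lead_G g \<longleftrightarrow> mc g \<noteq> 0 \<and> ma g / mc g \<in> {\<alpha>..\<beta>}"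
| "inf_position \<alpha> \<beta> Lead_T g \<longleftrightarrow> mc g \<noteq> 0 \<and> ma g / mc g \<notin> {\<alpha>..\<beta>}"

lemma mc_mmul_mc_zero: "mc g = 0 \<Longrightarrow> mc (mmul \<gamma> g) = mc \<gamma> * ma g"
  by (simp add: mmul_def)

lemma mc_mmul_mc_nonzero: "mc g \<noteq> 0 \<Longrightarrow> mc (mmul \<gamma> g) = mc g * (mc \<gamma> * (ma g / mc g) + md \<gamma>)"
  by (simp add: mmul_def field_simps)

lemma inf_image_mmul:
  assumes "mdet \<gamma> = 1" and "mc (mmul \<gamma> g) \<noteq> 0"
  shows "- mc \<gamma> * (ma (mmul \<gamma> g) / mc (mmul \<gamma> g)) + ma \<gamma> = mc g / mc (mmul \<gamma> g)"
proof -
  have "- mc \<gamma> * ma (mmul \<gamma> g) + ma \<gamma> * mc (mmul \<gamma> g) = mdet \<gamma> * mc g"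
    by (simp add: mmul_def mdet_def algebra_simps)
  then show ?thesis
    using assms by (simp add: field_simps)
qed

lemma reduced_inf_position:
  assumes G: "psl_subgroup G"
    and c_nonzero: "\<forall>\<gamma>\<in>G. \<not> is_id \<gamma> \<longrightarrow> mc \<gamma> \<noteq> 0"
    and intervals: "\<forall>\<gamma>\<in>G. \<not> is_id \<gamma> \<longrightarrow> {x. \<bar>mc \<gamma> * x + md \<gamma>\<bar> \<le> 1} \<subseteq> {\<alpha>..\<beta>}"
    and l: "\<beta> - \<alpha> < l" "\<alpha> \<le> \<beta>"
  shows "reduced G l k g \<Longrightarrow> inf_position \<alpha> \<beta> k g"
proof (induction rule: reduced.induct)
  case (reduced_T \<tau>)
  then show ?case
    by (simp add: gen_group_translation_upper_triangular)
next
  case (reduced_G \<gamma> k g)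
  have det: "mdet \<gamma> = 1" and c\<gamma>: "mc \<gamma> \<noteq> 0"
    using psl_subgroup_mdet[OF G] c_nonzero reduced_G.hyps(1,2) by auto
  have "{y. \<bar>mc (minv \<gamma>) * y + md (minv \<gamma>)\<bar> \<le> 1} \<subseteq> {\<alpha>..\<beta>}"
    using intervals psl_subgroup_minv[OF G reduced_G.hyps(1)] reduced_G.hyps(2) by simp
  then have inv_interval: "y \<in> {\<alpha>..\<beta>}" if "\<bar>- mc \<gamma> * y + ma \<gamma>\<bar> \<le> 1" for y
    using that by (auto simp: minv_def)
  have "mc (mmul \<gamma> g) \<noteq> 0 \<and> \<bar>mc g / mc (mmul \<gamma> g)\<bar> \<le> 1"
  proof (cases k)
    case In_T
    then have "g \<in> gen_group {translation l}"
      using reduced_G.hyps(3) by (auto elim: reduced.cases)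
    then have "mc g = 0" "ma g \<noteq> 0"
      using gen_group_translation_upper_triangular by fastforce+
    then show ?thesis
      using c\<gamma> by (simp add: mc_mmul_mc_zero)
  next
    case Lead_T
    define x where "x = ma g / mc g"
    have cg: "mc g \<noteq> 0" and "x \<notin> {\<alpha>..\<beta>}"
      using reduced_G.IH Lead_T by (auto simp: x_def)
    then have "1 < \<bar>mc \<gamma> * x + md \<gamma>\<bar>"
      using intervals reduced_G.hyps(1,2) by force
    then show ?thesis
      using cg by (simp add: mc_mmul_mc_nonzero flip: x_def)
  qed (use reduced_G.hyps(4) in simp)
  then show ?case
    using inv_interval inf_image_mmul[OF det] by simp
next
  case (reduced_TG \<tau> g)
  obtain k :: int where \<tau>: "\<tau> = translation (of_int k * l) \<or> \<tau> = mneg (translation (of_int k * l))"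
    using reduced_TG.hyps(1) by (rule gen_group_translationE)
  have "k \<noteq> 0"
    using reduced_TG.hyps(2) \<tau> by (auto simp: translation_0 is_id_def)
  then have kl: "l \<le> of_int k * l \<or> of_int k * l \<le> - l"
    using l by (smt (verit) minus_mult_minus mult_le_cancel_right1 mult_minus_right
        of_int_1_le_iff of_int_minus)
  have cg: "mc g \<noteq> 0" and x: "ma g / mc g \<in> {\<alpha>..\<beta>}"
    using reduced_TG.IH by auto
  have "mc (mmul \<tau> g) = mc g \<or> mc (mmul \<tau> g) = - mc g"
    and "ma (mmul \<tau> g) / mc (mmul \<tau> g) = ma g / mc g + of_int k * l"
    using \<tau> cg by (auto simp: mmul_def translation_def mneg_def field_simps)
  moreover have "ma g / mc g + of_int k * l \<notin> {\<alpha>..\<beta>}"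
    using kl x l unfolding atLeastAtMost_iff by linarith
  ultimately show ?case
    using cg by auto
qed

theorem stab_inf_pingpong:
  assumes G: "psl_subgroup G" and R: "R \<subseteq> G"
    and c_nonzero: "\<forall>\<gamma>\<in>G. \<not> is_id \<gamma> \<longrightarrow> mc \<gamma> \<noteq> 0"
    and intervals: "\<forall>\<gamma>\<in>G. \<not> is_id \<gamma> \<longrightarrow> {x. \<bar>mc \<gamma> * x + md \<gamma>\<bar> \<le> 1} \<subseteq> {\<alpha>..\<beta>}"
    and l: "\<beta> - \<alpha> < l" "\<alpha> \<le> \<beta>"
  shows "stab_inf (gen_group (R \<union> {translation l})) = gen_group {translation l}"
proof
  show "stab_inf (gen_group (R \<union> {translation l})) \<subseteq> gen_group {translation l}"
  proof
    fix g
    assume "g \<in> stab_inf (gen_group (R \<union> {translation l}))"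
    then have g: "g \<in> gen_group (R \<union> {translation l})" and "mc g = 0"
      by (auto simp: stab_inf_def)
    obtain k where "reduced G l k g"
      using reduced_exists[OF G R g] by blast
    moreover have "k = In_T"
      using reduced_inf_position[OF G c_nonzero intervals l \<open>reduced G l k g\<close>] \<open>mc g = 0\<close>
      by (cases k) auto
    ultimately show "g \<in> gen_group {translation l}"
      by (auto elim: reduced.cases)
  qed
next
  show "gen_group {translation l} \<subseteq> stab_inf (gen_group (R \<union> {translation l}))"
    using gen_group_mono gen_group_translation_upper_triangular by (auto simp: stab_inf_def)
qed

section \<open>Bounded orbits and discreteness\<close>

lemma bounded_orbit_i:
  assumes "\<not> limit_point_inf G"
  shows "\<exists>M. \<forall>h\<in>G. cmod (moeb h \<i>) \<le> M"
proof (rule ccontr)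
  assume "\<not> ?thesis"
  then have "\<forall>n::nat. \<exists>h\<in>G. real n < cmod (moeb h \<i>)"
    by (meson not_le)
  then obtain s where s: "\<And>n. s n \<in> G \<and> real n < cmod (moeb (s n) \<i>)"
    by metis
  have "filterlim (\<lambda>n. cmod (moeb (s n) \<i>)) at_top sequentially"
    by (rule filterlim_at_top_mono[OF filterlim_real_sequentially])
      (use s in \<open>auto intro!: always_eventually less_imp_le\<close>)
  moreover have "\<i> \<in> UHP"
    by (simp add: UHP_def)
  ultimately show False
    using assms s unfolding limit_point_inf_def by blast
qed

lemma cmod_moeb_i:
  "cmod (moeb h \<i>) = sqrt ((ma h)\<^sup>2 + (mb h)\<^sup>2) / sqrt ((mc h)\<^sup>2 + (md h)\<^sup>2)"
proof -
  have "cmod (of_real x * \<i> + of_real y) = sqrt (x\<^sup>2 + y\<^sup>2)" for x y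
    by (simp add: cmod_def add.commute)
  then show ?thesis
    by (simp add: moeb_def norm_divide)
qed

lemma sum_squares_pos_mdet: "mdet h = 1 \<Longrightarrow> 0 < (mc h)\<^sup>2 + (md h)\<^sup>2"
  by (metis mdet_def mult_zero_right sum_power2_gt_zero_iff zero_neq_one diff_zero mult_zero_left)

lemma orbit_bound_entries:
  assumes G: "psl_subgroup G" and "\<not> limit_point_inf G"
  shows "\<exists>K\<ge>0. \<forall>h\<in>G. (ma h)\<^sup>2 + (mb h)\<^sup>2 \<le> K * ((mc h)\<^sup>2 + (md h)\<^sup>2)"
proof -
  obtain M where M: "\<forall>h\<in>G. cmod (moeb h \<i>) \<le> M"
    using bounded_orbit_i[OF assms(2)] by blast
  then have "0 \<le> M"
    using psl_subgroup_mI[OF G] norm_ge_zero order_trans by blast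
  have "(ma h)\<^sup>2 + (mb h)\<^sup>2 \<le> M\<^sup>2 * ((mc h)\<^sup>2 + (md h)\<^sup>2)" if h: "h \<in> G" for h
  proof -
    define P Q where "P = (ma h)\<^sup>2 + (mb h)\<^sup>2" and "Q = (mc h)\<^sup>2 + (md h)\<^sup>2"
    have "0 < Q"
      unfolding Q_def using sum_squares_pos_mdet psl_subgroup_mdet[OF G h] .
    have "sqrt P / sqrt Q \<le> M"
      using M h unfolding cmod_moeb_i P_def Q_def by blast
    then have "sqrt P \<le> sqrt (M\<^sup>2 * Q)"
      using \<open>0 < Q\<close> \<open>0 \<le> M\<close> by (simp add: divide_le_eq real_sqrt_mult)
    then show ?thesis
      unfolding P_def Q_def by simp
  qed
  then show ?thesis
    by (intro exI[of _ "M\<^sup>2"]) simp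
qed

lemma funpow_mmul_upper_triangular:
  "mc h = 0 \<Longrightarrow> mc ((mmul h ^^ n) mI) = 0 \<and> ma ((mmul h ^^ n) mI) = ma h ^ n \<and>
     md ((mmul h ^^ n) mI) = md h ^ n"
  by (induction n) (auto simp: mI_def mmul_def)

lemma psl_subgroup_funpow_mmul: "psl_subgroup G \<Longrightarrow> h \<in> G \<Longrightarrow> (mmul h ^^ n) mI \<in> G"
  by (induction n) (auto intro: psl_subgroup_mmul psl_subgroup_mI)

text \<open>Otherwise the powers of \<open>h\<close>, which fix \<open>\<infinity>\<close>, would push \<open>\<i>\<close> off to \<open>\<infinity>\<close>.\<close>
lemma abs_ma_le_1_if_mc_zero:
  assumes G: "psl_subgroup G" and K: "\<forall>h\<in>G. (ma h)\<^sup>2 + (mb h)\<^sup>2 \<le> K * ((mc h)\<^sup>2 + (md h)\<^sup>2)"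
    and h: "h \<in> G" and c: "mc h = 0"
  shows "\<bar>ma h\<bar> \<le> 1"
proof (rule ccontr)
  assume "\<not> ?thesis"
  then have "1 < (ma h)^4"
    using one_less_power[of "\<bar>ma h\<bar>" 4] by simp
  then obtain n where n: "K < ((ma h)^4)^n"
    using real_arch_pow by blast
  have ad: "ma h * md h = 1"
    using psl_subgroup_mdet[OF G h] c by (simp add: mdet_def)
  let ?g = "(mmul h ^^ n) mI"
  have g: "mc ?g = 0" "ma ?g = ma h ^ n" "md ?g = md h ^ n"
    using funpow_mmul_upper_triangular[OF c] by auto
  have "(ma ?g)\<^sup>2 + (mb ?g)\<^sup>2 \<le> K * ((mc ?g)\<^sup>2 + (md ?g)\<^sup>2)"
    using K psl_subgroup_funpow_mmul[OF G h] by blast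
  then have "(ma h ^ n)\<^sup>2 + (mb ?g)\<^sup>2 \<le> K * (md h ^ n)\<^sup>2"
    unfolding g by simp
  then have "(ma h ^ n)\<^sup>2 \<le> K * (md h ^ n)\<^sup>2"
    using zero_le_power2[of "mb ?g"] by linarith
  then have "(ma h ^ n)\<^sup>2 * (ma h ^ n)\<^sup>2 \<le> K * (md h ^ n)\<^sup>2 * (ma h ^ n)\<^sup>2"
    by (rule mult_right_mono) simp
  also have "\<dots> = K * ((ma h * md h) ^ n)\<^sup>2"
    by (simp add: power_mult_distrib)
  also have "(ma h ^ n)\<^sup>2 * (ma h ^ n)\<^sup>2 = ((ma h)^4)^n"
    by (simp flip: power_mult power_add)
  finally show False
    using n ad by simp
qed

lemma abs_add_eq_2_if_mult_eq_1:
  fixes a d :: real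
  assumes "\<bar>a\<bar> \<le> 1" "\<bar>d\<bar> \<le> 1" and ad: "a * d = 1"
  shows "\<bar>a + d\<bar> = 2"
proof -
  have "\<bar>a\<bar> * \<bar>d\<bar> = 1"
    using ad by (simp flip: abs_mult)
  moreover have "\<bar>a\<bar> * \<bar>d\<bar> \<le> \<bar>a\<bar>"
    using assms(2) by (simp add: mult_left_le)
  ultimately have "a = 1 \<or> a = -1"
    using assms(1) by linarith
  then show ?thesis
    using ad by auto
qed

lemma is_id_if_mc_zero:
  assumes G: "psl_subgroup G" and K: "\<forall>h\<in>G. (ma h)\<^sup>2 + (mb h)\<^sup>2 \<le> K * ((mc h)\<^sup>2 + (md h)\<^sup>2)"
    and no_parabolic: "\<forall>g\<in>G. \<not> parabolic_elt g" and h: "h \<in> G" and c: "mc h = 0"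
  shows "is_id h"
proof (rule ccontr)
  assume "\<not> is_id h"
  have "\<bar>ma h\<bar> \<le> 1"
    using abs_ma_le_1_if_mc_zero[OF G K h c] .
  moreover have "\<bar>md h\<bar> \<le> 1"
    using abs_ma_le_1_if_mc_zero[OF G K psl_subgroup_minv[OF G h]] c by (simp add: minv_def)
  moreover have "ma h * md h = 1"
    using psl_subgroup_mdet[OF G h] c by (simp add: mdet_def)
  ultimately have "\<bar>ma h + md h\<bar> = 2"
    by (rule abs_add_eq_2_if_mult_eq_1)
  then show False
    using no_parabolic h \<open>\<not> is_id h\<close> by (simp add: parabolic_elt_def mtrace_def)
qed

lemma le_of_square_le_affine:
  fixes y K :: real
  assumes K: "0 \<le> K" and y: "y * y \<le> 2 + 2 * K * (1 + y)"
  shows "y \<le> 2 + 4 * K"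
proof (rule ccontr)
  assume "\<not> ?thesis"
  then have "(2 + 4 * K) * y < y * y" and "1 < y"
    using K by (auto intro: mult_strict_right_mono)
  moreover have "2 + 2 * K * (1 + y) \<le> (2 + 4 * K) * y"
    using K \<open>1 < y\<close> mult_left_mono[of 1 y K] by (simp add: algebra_simps)
  ultimately show False
    using y by linarith
qed

lemma entries_bound:
  fixes a b c d K :: real
  assumes K: "0 \<le> K" and h: "a\<^sup>2 + b\<^sup>2 \<le> K * (c\<^sup>2 + d\<^sup>2)" and h_inv: "d\<^sup>2 + b\<^sup>2 \<le> K * (c\<^sup>2 + a\<^sup>2)"
    and det: "a * d - b * c = 1" and c: "c\<^sup>2 \<le> 1"
  shows "a\<^sup>2 + b\<^sup>2 + c\<^sup>2 + d\<^sup>2 \<le> 1 + 3 * ((1 + K) * (3 + 4 * K))"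
proof -
  define m where "m = min (a\<^sup>2) (d\<^sup>2)"
  have "K * (c\<^sup>2 + d\<^sup>2) \<le> K * (1 + d\<^sup>2)" "K * (c\<^sup>2 + a\<^sup>2) \<le> K * (1 + a\<^sup>2)"
    using c K by (simp_all add: mult_left_mono)
  then have a: "a\<^sup>2 \<le> K * (1 + d\<^sup>2)" and d: "d\<^sup>2 \<le> K * (1 + a\<^sup>2)"
    and "b\<^sup>2 \<le> K * (1 + d\<^sup>2)" "b\<^sup>2 \<le> K * (1 + a\<^sup>2)"
    using h h_inv zero_le_power2[of a] zero_le_power2[of b] zero_le_power2[of d] by linarith+
  then have b: "b\<^sup>2 \<le> K * (1 + m)"
    unfolding m_def min_def by simp
  have "(a * d)\<^sup>2 = (1 + b * c)\<^sup>2"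
    using det by (simp add: algebra_simps)
  also have "\<dots> \<le> 2 + 2 * (b * c)\<^sup>2"
    using zero_le_power2[of "1 - b * c"] unfolding power2_sum power2_diff by simp
  also have "(b * c)\<^sup>2 \<le> b\<^sup>2"
    using c by (simp add: power_mult_distrib mult_left_le)
  finally have "m * m \<le> 2 + 2 * K * (1 + m)"
    using b mult_mono[of m "a\<^sup>2" m "d\<^sup>2"] unfolding m_def by (auto simp: power_mult_distrib)
  then have m: "m \<le> 2 + 4 * K"
    by (rule le_of_square_le_affine[OF K])
  have "K * (1 + m) \<le> K * (3 + 4 * K)"
    using m K by (simp add: mult_left_mono)
  moreover have "K * (3 + 4 * K) \<le> (1 + K) * (3 + 4 * K)" and "2 + 4 * K \<le> (1 + K) * (3 + 4 * K)"
    using K by (simp_all add: algebra_simps)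
  moreover have "a\<^sup>2 \<le> K * (1 + m) \<or> a\<^sup>2 = m" and "d\<^sup>2 \<le> K * (1 + m) \<or> d\<^sup>2 = m"
    using a d unfolding m_def by auto
  ultimately show ?thesis
    using b c m by linarith
qed

definition m2_coords :: "m2 \<Rightarrow> (real \<times> real) \<times> (real \<times> real)" where
  "m2_coords g = ((ma g, mb g), (mc g, md g))"

lemma inj_m2_coords: "inj m2_coords"
  by (rule injI) (auto simp: m2_coords_def intro: m2_eqI)

lemma norm_m2_coords: "norm (m2_coords g) = sqrt ((ma g)\<^sup>2 + (mb g)\<^sup>2 + (mc g)\<^sup>2 + (md g)\<^sup>2)"
  by (simp add: m2_coords_def norm_Pair add.assoc)

lemma abs_entries_le_norm_m2_coords:
  "\<bar>ma g\<bar> \<le> norm (m2_coords g) \<and> \<bar>mb g\<bar> \<le> norm (m2_coords g) \<and>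
   \<bar>mc g\<bar> \<le> norm (m2_coords g) \<and> \<bar>md g\<bar> \<le> norm (m2_coords g)"
  unfolding m2_coords_def real_norm_def[symmetric]
  by (meson norm_fst_le norm_snd_le order_trans)

lemma abs_entries_le_dist_m2_coords:
  "\<bar>ma g - ma h\<bar> \<le> dist (m2_coords g) (m2_coords h) \<and> \<bar>mb g - mb h\<bar> \<le> dist (m2_coords g) (m2_coords h) \<and>
   \<bar>mc g - mc h\<bar> \<le> dist (m2_coords g) (m2_coords h) \<and> \<bar>md g - md h\<bar> \<le> dist (m2_coords g) (m2_coords h)"
proof -
  let ?diff = "\<lparr>ma = ma g - ma h, mb = mb g - mb h, mc = mc g - mc h, md = md g - md h\<rparr>"
  have "dist (m2_coords g) (m2_coords h) = norm (m2_coords ?diff)"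
    by (simp add: dist_norm m2_coords_def)
  then show ?thesis
    using abs_entries_le_norm_m2_coords[of ?diff] by simp
qed

lemma minv_mmul_near_mI:
  assumes det: "mdet g = 1"
    and B: "\<bar>ma g\<bar> \<le> B" "\<bar>mb g\<bar> \<le> B" "\<bar>mc g\<bar> \<le> B" "\<bar>md g\<bar> \<le> B"
    and close: "dist (m2_coords h) (m2_coords g) \<le> \<eta>"
  defines "k \<equiv> mmul (minv g) h"
  shows "\<bar>ma k - ma mI\<bar> + \<bar>mb k - mb mI\<bar> + \<bar>mc k - mc mI\<bar> + \<bar>md k - md mI\<bar> \<le> 8 * B * \<eta>"
proof -
  have bilinear: "\<bar>x * u - y * v\<bar> \<le> 2 * B * \<eta>"
    if "\<bar>x\<bar> \<le> B" "\<bar>y\<bar> \<le> B" "\<bar>u\<bar> \<le> \<eta>" "\<bar>v\<bar> \<le> \<eta>" for x y u v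
  proof -
    have "\<bar>x * u\<bar> \<le> B * \<eta>" "\<bar>y * v\<bar> \<le> B * \<eta>"
      using that by (simp_all add: abs_mult mult_mono')
    then show ?thesis
      by linarith
  qed
  have \<Delta>: "\<bar>ma h - ma g\<bar> \<le> \<eta>" "\<bar>mb h - mb g\<bar> \<le> \<eta>" "\<bar>mc h - mc g\<bar> \<le> \<eta>" "\<bar>md h - md g\<bar> \<le> \<eta>"
    using abs_entries_le_dist_m2_coords[of h g] close by auto
  have "ma k - ma mI = md g * (ma h - ma g) - mb g * (mc h - mc g)"
    and "mb k - mb mI = md g * (mb h - mb g) - mb g * (md h - md g)"
    and "mc k - mc mI = ma g * (mc h - mc g) - mc g * (ma h - ma g)"
    and "md k - md mI = ma g * (md h - md g) - mc g * (mb h - mb g)"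
    using det by (simp_all add: k_def mmul_def minv_def mI_def mdet_def algebra_simps)
  then have "\<bar>ma k - ma mI\<bar> \<le> 2 * B * \<eta>" "\<bar>mb k - mb mI\<bar> \<le> 2 * B * \<eta>"
    "\<bar>mc k - mc mI\<bar> \<le> 2 * B * \<eta>" "\<bar>md k - md mI\<bar> \<le> 2 * B * \<eta>"
    using bilinear[OF B(4) B(2) \<Delta>(1) \<Delta>(3)] bilinear[OF B(4) B(2) \<Delta>(2) \<Delta>(4)]
      bilinear[OF B(1) B(3) \<Delta>(3) \<Delta>(1)] bilinear[OF B(1) B(3) \<Delta>(4) \<Delta>(2)]
    by simp_all
  then show ?thesis
    by linarith
qed

lemma finite_bounded_entries_fuchsian:
  assumes "fuchsian G"
  shows "finite {h\<in>G. (ma h)\<^sup>2 + (mb h)\<^sup>2 + (mc h)\<^sup>2 + (md h)\<^sup>2 \<le> C}" (is "finite ?S")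
proof -
  have G: "psl_subgroup G"
    using assms by (simp add: fuchsian_def)
  obtain e where "0 < e" and isolated_mI: "\<And>h. h \<in> G \<Longrightarrow>
      \<bar>ma h - ma mI\<bar> + \<bar>mb h - mb mI\<bar> + \<bar>mc h - mc mI\<bar> + \<bar>md h - md mI\<bar> < e \<Longrightarrow> h = mI"
    using assms psl_subgroup_mI[OF G] unfolding fuchsian_def by blast
  define B where "B = sqrt \<bar>C\<bar>"
  have norm_le: "norm (m2_coords h) \<le> B" if "h \<in> ?S" for h
    using that real_sqrt_le_mono[of _ "\<bar>C\<bar>"] by (auto simp: norm_m2_coords B_def)
  define \<eta> where "\<eta> = e / (8 * B + 1)"
  have "0 \<le> B"
    by (simp add: B_def)
  then have "0 < \<eta>" "8 * B * \<eta> < e"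
    using \<open>0 < e\<close> by (simp_all add: \<eta>_def field_simps)
  have "h = g" if "g \<in> ?S" "h \<in> ?S" "dist (m2_coords h) (m2_coords g) < \<eta>" for g h
  proof -
    have det: "mdet g = 1"
      using psl_subgroup_mdet[OF G] that(1) by blast
    have "\<bar>ma g\<bar> \<le> B \<and> \<bar>mb g\<bar> \<le> B \<and> \<bar>mc g\<bar> \<le> B \<and> \<bar>md g\<bar> \<le> B"
      using abs_entries_le_norm_m2_coords[of g] norm_le[OF that(1)] by linarith
    then have "\<bar>ma (mmul (minv g) h) - ma mI\<bar> + \<bar>mb (mmul (minv g) h) - mb mI\<bar> +
        \<bar>mc (mmul (minv g) h) - mc mI\<bar> + \<bar>md (mmul (minv g) h) - md mI\<bar> < e"
      using minv_mmul_near_mI[OF det, of B h \<eta>] that(3) \<open>8 * B * \<eta> < e\<close> by auto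
    moreover have "mmul (minv g) h \<in> G"
      using that(1,2) by (simp add: psl_subgroup_mmul[OF G] psl_subgroup_minv[OF G])
    ultimately have "mmul (minv g) h = mI"
      using isolated_mI by blast
    then show "h = g"
      by (metis det mmul_assoc mmul_mI_left mmul_mI_right mmul_minv_right)
  qed
  then have "uniform_discrete (m2_coords ` ?S)"
    using \<open>0 < \<eta>\<close> unfolding uniform_discrete_def by (auto simp: dist_commute)
  moreover have "bounded (m2_coords ` ?S)"
    using norm_le by (auto simp: bounded_iff)
  ultimately have "finite (m2_coords ` ?S)"
    using uniform_discrete_finite_iff by blast
  then show ?thesis
    using finite_imageD inj_on_subset[OF inj_m2_coords] by blast
qed

lemma mc_bounded_below:
  assumes G: "fuchsian G" and K0: "0 \<le> K"
    and K: "\<forall>h\<in>G. (ma h)\<^sup>2 + (mb h)\<^sup>2 \<le> K * ((mc h)\<^sup>2 + (md h)\<^sup>2)"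
    and c_nonzero: "\<forall>h\<in>G. \<not> is_id h \<longrightarrow> mc h \<noteq> 0"
  shows "\<exists>\<delta>>0. \<forall>h\<in>G. \<not> is_id h \<longrightarrow> \<delta> \<le> \<bar>mc h\<bar>"
proof -
  have psl: "psl_subgroup G"
    using G by (simp add: fuchsian_def)
  define S where "S = {h\<in>G. \<not> is_id h \<and> \<bar>mc h\<bar> \<le> 1}"
  have "S \<subseteq> {h\<in>G. (ma h)\<^sup>2 + (mb h)\<^sup>2 + (mc h)\<^sup>2 + (md h)\<^sup>2 \<le> 1 + 3 * ((1 + K) * (3 + 4 * K))}"
  proof safe
    fix h
    assume "h \<in> S"
    then have h: "h \<in> G" and "(mc h)\<^sup>2 \<le> 1"
      by (auto simp: S_def abs_square_le_1)
    moreover have "(md h)\<^sup>2 + (mb h)\<^sup>2 \<le> K * ((mc h)\<^sup>2 + (ma h)\<^sup>2)"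
      using K psl_subgroup_minv[OF psl h] by (auto simp: minv_def)
    moreover have "ma h * md h - mb h * mc h = 1"
      using psl_subgroup_mdet[OF psl h] by (simp add: mdet_def)
    ultimately show "(ma h)\<^sup>2 + (mb h)\<^sup>2 + (mc h)\<^sup>2 + (md h)\<^sup>2 \<le> 1 + 3 * ((1 + K) * (3 + 4 * K))"
      using entries_bound[OF K0] K by blast
  qed (simp add: S_def)
  then have "finite S"
    using finite_bounded_entries_fuchsian[OF G] finite_subset by blast
  define \<delta> where "\<delta> = Min (insert 1 ((\<lambda>h. \<bar>mc h\<bar>) ` S))"
  have "0 < \<delta>"
    using \<open>finite S\<close> c_nonzero unfolding \<delta>_def S_def by auto
  moreover have "\<delta> \<le> \<bar>mc h\<bar>" if "h \<in> G" "\<not> is_id h" for h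
  proof (cases "\<bar>mc h\<bar> \<le> 1")
    case True
    then have "h \<in> S"
      using that by (simp add: S_def)
    then show ?thesis
      using \<open>finite S\<close> by (simp add: \<delta>_def)
  next
    case False
    have "\<delta> \<le> 1"
      unfolding \<delta>_def using \<open>finite S\<close> by (intro Min_le) auto
    with False show ?thesis
      by linarith
  qed
  ultimately show ?thesis
    by blast
qed

section \<open>Isometric intervals\<close>

lemma closure_abs_affine_lt_1:
  fixes c d :: real
  assumes "c \<noteq> 0"
  shows "closure {x. \<bar>c * x + d\<bar> < 1} = {x. \<bar>c * x + d\<bar> \<le> 1}"
proof -
  define m r where "m = - d / c" and "r = 1 / \<bar>c\<bar>"
  have eq: "\<bar>c * x + d\<bar> = \<bar>x - m\<bar> * \<bar>c\<bar>" for x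
    using assms by (simp add: m_def flip: abs_mult) (simp add: algebra_simps)
  have "\<bar>c * x + d\<bar> < 1 \<longleftrightarrow> \<bar>x - m\<bar> < r" "\<bar>c * x + d\<bar> \<le> 1 \<longleftrightarrow> \<bar>x - m\<bar> \<le> r" for x
    unfolding eq r_def using assms by (simp_all add: pos_less_divide_eq pos_le_divide_eq)
  then have "{x. \<bar>c * x + d\<bar> < 1} = {m - r<..<m + r}" and "{x. \<bar>c * x + d\<bar> \<le> 1} = {m - r..m + r}"
    by (auto simp: abs_less_iff abs_le_iff)
  moreover have "m - r < m + r"
    using assms by (simp add: r_def)
  ultimately show ?thesis
    by simp
qed

text \<open>The vertical line through \<open>x\<close> runs from inside the isometric circle of \<open>\<gamma>\<close> (near the
  real axis) to \<open>fordK G\<close> (above height \<open>1 / \<delta>\<close>, every isometric circle lies below), so it meets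
  the frontier of \<open>fordK G\<close>.\<close>
lemma bdK_meets_vertical_line:
  assumes \<delta>: "0 < \<delta>" "\<forall>h\<in>G. \<not> is_id h \<longrightarrow> \<delta> \<le> \<bar>mc h\<bar>"
    and \<gamma>: "\<gamma> \<in> G" "\<not> is_id \<gamma>" and x: "\<bar>mc \<gamma> * x + md \<gamma>\<bar> < 1"
  shows "\<exists>p\<in>bdK G. Re p = x"
proof -
  define u where "u = \<bar>mc \<gamma> * x + md \<gamma>\<bar>"
  define y0 where "y0 = (1 - u) / (2 * (\<bar>mc \<gamma>\<bar> + 1))"
  define y1 where "y1 = 1 / \<delta> + 1"
  have "0 < y0"
    using x by (simp add: u_def y0_def)
  have "0 < y1"
    unfolding y1_def using \<delta>(1) by (intro add_pos_pos) simp_all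
  have "\<bar>mc \<gamma>\<bar> * y0 < 1 - u"
  proof -
    have "\<bar>mc \<gamma>\<bar> * y0 \<le> (\<bar>mc \<gamma>\<bar> + 1) * y0"
      using \<open>0 < y0\<close> by (simp add: mult_right_mono)
    also have "\<dots> = (1 - u) / 2"
      by (simp add: y0_def field_simps add_pos_nonneg)
    finally show ?thesis
      using x by (simp add: u_def)
  qed
  have low: "Complex x y0 \<notin> fordK G"
  proof
    assume "Complex x y0 \<in> fordK G"
    then have "1 < cmod (of_real (mc \<gamma>) * Complex x y0 + of_real (md \<gamma>))"
      using \<gamma> by (auto simp: fordK_def ext_isom_circle_def)
    also have "\<dots> \<le> u + \<bar>mc \<gamma>\<bar> * y0"
      using cmod_le[of "of_real (mc \<gamma>) * Complex x y0 + of_real (md \<gamma>)"] \<open>0 < y0\<close>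
      by (simp add: u_def abs_mult)
    finally show False
      using \<open>\<bar>mc \<gamma>\<bar> * y0 < 1 - u\<close> by linarith
  qed
  have high: "Complex x y1 \<in> fordK G"
  proof -
    have "1 < cmod (of_real (mc h) * Complex x y1 + of_real (md h))" if "h \<in> G" "\<not> is_id h" for h
    proof -
      have "1 < \<delta> * y1"
        using \<delta>(1) by (simp add: y1_def field_simps)
      also have "\<dots> \<le> \<bar>mc h\<bar> * y1"
        using \<delta>(2) that \<open>0 < y1\<close> by (simp add: mult_right_mono)
      also have "\<dots> = \<bar>Im (of_real (mc h) * Complex x y1 + of_real (md h))\<bar>"
        using \<open>0 < y1\<close> by (simp add: abs_mult)
      also have "\<dots> \<le> cmod (of_real (mc h) * Complex x y1 + of_real (md h))"
        by (rule abs_Im_le_cmod)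
      finally show ?thesis .
    qed
    then show ?thesis
      using \<open>0 < y1\<close> by (auto simp: fordK_def ext_isom_circle_def UHP_def)
  qed
  have "connected (closed_segment (Complex x y0) (Complex x y1))"
    by (simp add: convex_connected)
  then obtain p where p: "p \<in> closed_segment (Complex x y0) (Complex x y1)" "p \<in> frontier (fordK G)"
    using connected_Int_frontier[of _ "fordK G"] low high by blast
  then obtain v where v: "0 \<le> v" "v \<le> 1" "p = (1 - v) *\<^sub>R Complex x y0 + v *\<^sub>R Complex x y1"
    by (auto simp: in_segment)
  then have "Re p = (1 - v) * x + v * x" and Im_p: "Im p = (1 - v) * y0 + v * y1"
    by simp_all
  then have "Re p = x"
    by (simp add: algebra_simps)
  moreover have "0 < Im p"
  proof (cases "v = 1")
    case True
    then show ?thesis using Im_p \<open>0 < y1\<close> by simp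
  next
    case False
    then show ?thesis using Im_p v \<open>0 < y0\<close> \<open>0 < y1\<close> by (simp add: add_pos_nonneg)
  qed
  ultimately show ?thesis
    using p by (auto simp: bdK_def UHP_def)
qed

lemma isometric_intervals_subset:
  assumes \<delta>: "0 < \<delta>" "\<forall>h\<in>G. \<not> is_id h \<longrightarrow> \<delta> \<le> \<bar>mc h\<bar>"
    and c_nonzero: "\<forall>h\<in>G. \<not> is_id h \<longrightarrow> mc h \<noteq> 0"
    and bdK_bounds: "\<forall>z\<in>bdK G. \<alpha> \<le> Re z \<and> Re z \<le> \<beta>"
  shows "\<forall>\<gamma>\<in>G. \<not> is_id \<gamma> \<longrightarrow> {x. \<bar>mc \<gamma> * x + md \<gamma>\<bar> \<le> 1} \<subseteq> {\<alpha>..\<beta>}"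
proof (intro ballI impI)
  fix \<gamma>
  assume \<gamma>: "\<gamma> \<in> G" "\<not> is_id \<gamma>"
  have "{x. \<bar>mc \<gamma> * x + md \<gamma>\<bar> < 1} \<subseteq> {\<alpha>..\<beta>}"
    using bdK_meets_vertical_line[OF \<delta> \<gamma>] bdK_bounds by fastforce
  then have "closure {x. \<bar>mc \<gamma> * x + md \<gamma>\<bar> < 1} \<subseteq> {\<alpha>..\<beta>}"
    by (rule closure_minimal) simp
  then show "{x. \<bar>mc \<gamma> * x + md \<gamma>\<bar> \<le> 1} \<subseteq> {\<alpha>..\<beta>}"
    using c_nonzero \<gamma> by (simp add: closure_abs_affine_lt_1)
qed

theorem lemma4p6:
  fixes \<Gamma> :: "m2 set" and \<alpha> \<beta> \<alpha>' \<beta>' lam :: real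
  assumes fuchs: "fuchsian \<Gamma>"
    and geom_fin: "geometrically_finite \<Gamma>"
    and non_cocompact: "\<not> cocompact \<Gamma>"
    and has_hyp: "\<exists>g\<in>\<Gamma>. hyperbolic_elt g"
    and no_par: "\<forall>g\<in>\<Gamma>. \<not> parabolic_elt g"
    and inf_area: "infinite_covolume \<Gamma>"
    and ord_inf: "ordinary_nbhd_inf \<Gamma>"
    and alpha_lb: "\<forall>z\<in>bdK \<Gamma>. \<alpha> \<le> Re z"
    and alpha_greatest: "\<forall>a. (\<forall>z\<in>bdK \<Gamma>. a \<le> Re z) \<longrightarrow> a \<le> \<alpha>"
    and beta_ub: "\<forall>z\<in>bdK \<Gamma>. Re z \<le> \<beta>"
    and beta_least: "\<forall>b. (\<forall>z\<in>bdK \<Gamma>. Re z \<le> b) \<longrightarrow> \<beta> \<le> b"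
    and "\<alpha>' < \<alpha>" and "\<beta>' > \<beta>"
    and lam_def: "lam = \<beta>' - \<alpha>'"
  shows "stab_inf (Gamma_W \<Gamma> lam) = gen_group {translation lam}"
proof -
  have G: "psl_subgroup \<Gamma>"
    using fuchs by (simp add: fuchsian_def)
  obtain K where "0 \<le> K" and K: "\<forall>h\<in>\<Gamma>. (ma h)\<^sup>2 + (mb h)\<^sup>2 \<le> K * ((mc h)\<^sup>2 + (md h)\<^sup>2)"
    using orbit_bound_entries[OF G] ord_inf by (auto simp: ordinary_nbhd_inf_def)
  have c_nonzero: "\<forall>h\<in>\<Gamma>. \<not> is_id h \<longrightarrow> mc h \<noteq> 0"
    using is_id_if_mc_zero[OF G K no_par] by blast
  obtain \<delta> where "0 < \<delta>" and "\<forall>h\<in>\<Gamma>. \<not> is_id h \<longrightarrow> \<delta> \<le> \<bar>mc h\<bar>"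
    using mc_bounded_below[OF fuchs \<open>0 \<le> K\<close> K c_nonzero] by blast
  then have intervals: "\<forall>\<gamma>\<in>\<Gamma>. \<not> is_id \<gamma> \<longrightarrow> {x. \<bar>mc \<gamma> * x + md \<gamma>\<bar> \<le> 1} \<subseteq> {\<alpha>..\<beta>}"
    using isometric_intervals_subset c_nonzero alpha_lb beta_ub by blast
  have "bdK \<Gamma> \<noteq> {}"
    using alpha_greatest[rule_format, of "\<alpha> + 1"] by auto
  then have "\<alpha> \<le> \<beta>"
    using alpha_lb beta_ub by force
  moreover have "\<beta> - \<alpha> < lam"
    using \<open>\<alpha>' < \<alpha>\<close> \<open>\<beta>' > \<beta>\<close> lam_def by linarith
  moreover have "Gamma_REL \<Gamma> \<subseteq> \<Gamma>"
    by (auto simp: Gamma_REL_def)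
  ultimately show ?thesis
    unfolding Gamma_W_def using stab_inf_pingpong[OF G _ c_nonzero intervals] by blast
qed

end
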